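(* Let $t\le 1/2$ be a positive rational number. If $G$ is a minimally $t$-tough chordal graph, then every simplicial vertex of $G$ has degree $1$.
   Context: All graphs are finite, simple and undirected. A graph is chordal if it contains no induced cycle of length at least $4$. A vertex $v$ is simplicial if its neighborhood $N(v)$ forms a clique. $\omega(H)$ denotes the number of components of $H$. A cutset of $G$ is a vertex set $S$ with $G-S$ disconnected. For positive real $t$, $G$ is $t$-tough if $\omega(G-S)\le |S|/t$ for every cutset $S$; the toughness $\tau(G)$ is the largest such $t$, with $\tau(K_n)=\infty$ for all $n\ge1$. $G$ is minimally $t$-tough if $\tau(G)=t$ and $\tau(G-e)<t$ for every edge $e$ of $G$. *)

theory Defs
  imports "HOL-Analysis.Analysis"
begin

definition simple_graph :: "'a set \<Rightarrow> 'a set set \<Rightarrow> bool" where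
  "simple_graph V E \<longleftrightarrow> finite V \<and> (\<forall>e\<in>E. \<exists>u v. e = {u, v} \<and> u \<noteq> v \<and> u \<in> V \<and> v \<in> V)"

definition nbhd :: "'a set \<Rightarrow> 'a set set \<Rightarrow> 'a \<Rightarrow> 'a set" where
  "nbhd V E v = {u \<in> V. {u, v} \<in> E}"

definition degree :: "'a set \<Rightarrow> 'a set set \<Rightarrow> 'a \<Rightarrow> nat" where
  "degree V E v = card (nbhd V E v)"

definition simplicial :: "'a set \<Rightarrow> 'a set set \<Rightarrow> 'a \<Rightarrow> bool" where
  "simplicial V E v \<longleftrightarrow> v \<in> V \<and>
     (\<forall>x\<in>nbhd V E v. \<forall>y\<in>nbhd V E v. x \<noteq> y \<longrightarrow> {x, y} \<in> E)"

definition induced_cycle :: "'a set \<Rightarrow> 'a set set \<Rightarrow> 'a list \<Rightarrow> bool" where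
  "induced_cycle V E vs \<longleftrightarrow> distinct vs \<and> set vs \<subseteq> V \<and> length vs \<ge> 3 \<and>
     (\<forall>i<length vs. \<forall>j<length vs. i \<noteq> j \<longrightarrow>
        ({vs ! i, vs ! j} \<in> E \<longleftrightarrow>
           (j = Suc i mod length vs \<or> i = Suc j mod length vs)))"

definition chordal :: "'a set \<Rightarrow> 'a set set \<Rightarrow> bool" where
  "chordal V E \<longleftrightarrow> (\<forall>vs. induced_cycle V E vs \<longrightarrow> length vs < 4)"

definition del_verts :: "'a set \<Rightarrow> 'a set set \<Rightarrow> 'a set \<Rightarrow> 'a set \<times> 'a set set" where
  "del_verts V E S = (V - S, {e \<in> E. e \<inter> S = {}})"

definition reach :: "'a set \<Rightarrow> 'a set set \<Rightarrow> ('a \<times> 'a) set" where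
  "reach V E = (Restr {(u, v). {u, v} \<in> E} V)\<^sup>*"

definition component_of :: "'a set \<Rightarrow> 'a set set \<Rightarrow> 'a \<Rightarrow> 'a set" where
  "component_of V E x = {y \<in> V. (x, y) \<in> reach V E}"

definition num_components :: "'a set \<Rightarrow> 'a set set \<Rightarrow> nat" where
  "num_components V E = card (component_of V E ` V)"

definition cutset :: "'a set \<Rightarrow> 'a set set \<Rightarrow> 'a set \<Rightarrow> bool" where
  "cutset V E S \<longleftrightarrow> S \<subseteq> V \<and> num_components (fst (del_verts V E S)) (snd (del_verts V E S)) \<ge> 2"

text \<open>t-tough: \<omega>(G-S) \<le> |S|/t for every cutset S (written multiplicatively, t > 0).\<close>
definition tough :: "'a set \<Rightarrow> 'a set set \<Rightarrow> real \<Rightarrow> bool" where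
  "tough V E t \<longleftrightarrow> (\<forall>S. cutset V E S \<longrightarrow>
      t * real (num_components (fst (del_verts V E S)) (snd (del_verts V E S))) \<le> real (card S))"

text \<open>Toughness: the largest t with G t-tough; \<infinity> if G has no cutset (complete graphs).\<close>
definition toughness :: "'a set \<Rightarrow> 'a set set \<Rightarrow> ereal" where
  "toughness V E = Sup {ereal t | t. t \<ge> 0 \<and> tough V E t}"

definition minimally_tough :: "'a set \<Rightarrow> 'a set set \<Rightarrow> real \<Rightarrow> bool" where
  "minimally_tough V E t \<longleftrightarrow> toughness V E = ereal t \<and>
     (\<forall>e\<in>E. toughness V (E - {e}) < ereal t)"

end

theory Submission
  imports Defs
begin

text \<open>Let v be simplicial with two neighbours u and w. Deleting the edge uw keeps G t-tough
  for \<open>t \<le> 1/2\<close>: a cutset S of \<open>G - uw\<close> avoiding v separates G just as well, because uw is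
  bypassed through v; a cutset S containing v yields the cutset \<open>S - {v}\<close> of G, since putting
  v back merges at most two components into the one of v. So a minimally t-tough graph has no
  such u, w, and v is not isolated since G is connected (or, if \<open>G = K\<^sub>1\<close>, has infinite
  toughness).\<close>

lemma simple_graph_edge_neq:
  assumes "simple_graph V E" "{x, y} \<in> E"
  shows "x \<noteq> y"
  using assms unfolding simple_graph_def by (metis doubleton_eq_iff insert_absorb2)

lemma reach_edge: "x \<in> V \<Longrightarrow> y \<in> V \<Longrightarrow> {x, y} \<in> E \<Longrightarrow> (x, y) \<in> reach V E"
  unfolding reach_def by auto

lemma reach_trans: "(x, y) \<in> reach V E \<Longrightarrow> (y, z) \<in> reach V E \<Longrightarrow> (x, z) \<in> reach V E"
  unfolding reach_def by (rule rtrancl_trans)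

lemma reach_sym:
  assumes "(x, y) \<in> reach V E"
  shows "(y, x) \<in> reach V E"
  using assms unfolding reach_def
proof (induction rule: rtrancl_induct)
  case (step y z)
  then have "(z, y) \<in> Restr {(u, v). {u, v} \<in> E} V" by (auto simp: insert_commute)
  then show ?case using step.IH by (rule converse_rtrancl_into_rtrancl)
qed simp

lemma component_of_eq_if_reach:
  assumes "(x, y) \<in> reach V E"
  shows "component_of V E x = component_of V E y"
proof -
  have "(y, x) \<in> reach V E" using assms by (rule reach_sym)
  then have "(x, z) \<in> reach V E \<longleftrightarrow> (y, z) \<in> reach V E" for z
    using assms reach_trans by metis
  then show ?thesis unfolding component_of_def by auto
qed

lemma component_of_edge:
  assumes "x \<in> V" "y \<in> V" "{x, y} \<in> E"
  shows "component_of V E x = component_of V E y"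
  using assms by (intro component_of_eq_if_reach reach_edge)

lemma reach_invariant:
  assumes "\<And>x y. x \<in> V \<Longrightarrow> y \<in> V \<Longrightarrow> {x, y} \<in> E \<Longrightarrow> f x = f y"
    and "(x, y) \<in> reach V E"
  shows "f x = f y"
  using assms(2) unfolding reach_def
  by (induction rule: rtrancl_induct) (auto dest: assms(1))

lemma card_image_le_num_components:
  assumes fin: "finite V"
    and inv: "\<And>x y. x \<in> V \<Longrightarrow> y \<in> V \<Longrightarrow> {x, y} \<in> E \<Longrightarrow> f x = f y"
  shows "card (f ` V) \<le> num_components V E"
proof -
  let ?g = "\<lambda>C. f (SOME x. x \<in> C)"
  have "f ` V \<subseteq> ?g ` component_of V E ` V"
  proof
    fix a assume "a \<in> f ` V"
    then obtain x where x: "x \<in> V" "a = f x" by auto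
    let ?C = "component_of V E x"
    have "x \<in> ?C" using x unfolding component_of_def reach_def by auto
    then have "(SOME y. y \<in> ?C) \<in> ?C" by (rule someI)
    then have "(x, SOME y. y \<in> ?C) \<in> reach V E" unfolding component_of_def by auto
    with inv have "f x = ?g ?C" by (rule reach_invariant)
    then show "a \<in> ?g ` component_of V E ` V" using x by auto
  qed
  then have "card (f ` V) \<le> card (?g ` component_of V E ` V)"
    using fin by (intro card_mono) auto
  also have "\<dots> \<le> num_components V E"
    unfolding num_components_def using fin by (intro card_image_le) auto
  finally show ?thesis .
qed

lemma num_components_le_card: "finite V \<Longrightarrow> num_components V E \<le> card V"
  unfolding num_components_def by (rule card_image_le)

lemma num_components_delete_edge_le:
  assumes "finite V" "(u, w) \<in> reach V (E - {{u, w}})"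
  shows "num_components V (E - {{u, w}}) \<le> num_components V E"
proof -
  let ?C = "component_of V (E - {{u, w}})"
  have "card (?C ` V) \<le> num_components V E"
  proof (rule card_image_le_num_components[OF assms(1)])
    fix x y assume "x \<in> V" "y \<in> V" "{x, y} \<in> E"
    then show "?C x = ?C y"
      using component_of_eq_if_reach[OF assms(2)] component_of_edge[of x V y "E - {{u, w}}"]
      by (cases "{x, y} = {u, w}") (auto simp: doubleton_eq_iff)
  qed
  then show ?thesis unfolding num_components_def .
qed

text \<open>Re-inserting v, with new edges only inside \<open>insert v N\<close>, merges at most the components
  meeting N into one.\<close>
lemma num_components_insert_vertex:
  assumes fin: "finite VH" and N: "N \<subseteq> VH" and v: "v \<notin> VH"
    and edges: "\<And>x y. x \<in> insert v VH \<Longrightarrow> y \<in> insert v VH \<Longrightarrow> {x, y} \<in> E' \<Longrightarrow>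
      x \<in> insert v N \<and> y \<in> insert v N \<or> x \<in> VH \<and> y \<in> VH \<and> {x, y} \<in> EH"
  shows "num_components VH EH + 1 \<le>
    num_components (insert v VH) E' + card (component_of VH EH ` N)"
proof -
  define C where "C = component_of VH EH"
  define P where "P = C ` N"
  define f where "f x = (if x = v \<or> C x \<in> P then None else Some (C x))" for x
  have merged: "f x = None" if "x \<in> insert v N" for x
    using that unfolding f_def P_def by auto
  have "card (f ` insert v VH) \<le> num_components (insert v VH) E'"
  proof (rule card_image_le_num_components)
    fix x y assume "x \<in> insert v VH" "y \<in> insert v VH" "{x, y} \<in> E'"
    from edges[OF this] show "f x = f y"
    proof
      assume "x \<in> VH \<and> y \<in> VH \<and> {x, y} \<in> EH"
      then have "C x = C y" "x \<noteq> v" "y \<noteq> v"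
        using component_of_edge[of x VH y EH] v unfolding C_def by auto
      then show ?thesis unfolding f_def by simp
    qed (auto simp: merged)
  qed (use fin in simp)
  moreover have "insert None (Some ` (C ` VH - P)) \<subseteq> f ` insert v VH"
    using v unfolding f_def by (force simp: image_iff)
  then have "card (insert None (Some ` (C ` VH - P))) \<le> card (f ` insert v VH)"
    using fin by (intro card_mono) auto
  moreover have "card (insert None (Some ` (C ` VH - P))) = card (C ` VH - P) + 1"
    using fin by (simp add: card_image)
  moreover have "card (C ` VH) \<le> card (C ` VH - P) + card P"
  proof -
    have "card (C ` VH) \<le> card ((C ` VH - P) \<union> P)"
      using fin finite_subset[OF N fin] unfolding P_def by (intro card_mono) auto
    then show ?thesis using card_Un_le le_trans by blast
  qed
  ultimately show ?thesis unfolding num_components_def C_def P_def by linarith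
qed

lemma card_components_meeting_clique_minus_edge:
  assumes "N \<subseteq> VH"
    and clique: "\<And>x y. x \<in> N \<Longrightarrow> y \<in> N \<Longrightarrow> x \<noteq> y \<Longrightarrow> {x, y} \<noteq> {u, w} \<Longrightarrow> {x, y} \<in> EH"
  shows "card (component_of VH EH ` N) \<le> 2"
proof (cases "N = {}")
  case False
  then obtain a where a: "a \<in> N" by auto
  define b where "b = (if a = u then w else u)"
  let ?C = "component_of VH EH"
  have "?C ` N \<subseteq> {?C a, ?C b}"
  proof
    fix c assume "c \<in> ?C ` N"
    then obtain x where x: "x \<in> N" "c = ?C x" by auto
    show "c \<in> {?C a, ?C b}"
    proof (cases "x = a \<or> {x, a} = {u, w}")
      case True
      then have "x = a \<or> x = b" unfolding b_def by (auto simp: doubleton_eq_iff)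
      then show ?thesis using x by auto
    next
      case False
      then have "{x, a} \<in> EH" using clique[OF x(1) a] by auto
      then have "?C x = ?C a" using component_of_edge x(1) a assms(1) by (metis subsetD)
      then show ?thesis using x by auto
    qed
  qed
  then have "card (?C ` N) \<le> card {?C a, ?C b}" by (intro card_mono) auto
  also have "\<dots> \<le> 2" by (simp add: card_insert_le_m1)
  finally show ?thesis .
qed simp

abbreviation num_components_del :: "'a set \<Rightarrow> 'a set set \<Rightarrow> 'a set \<Rightarrow> nat" where
  "num_components_del V E S \<equiv> num_components (V - S) {e \<in> E. e \<inter> S = {}}"

lemma tough_iff:
  "tough V E t \<longleftrightarrow>
    (\<forall>S \<subseteq> V. 2 \<le> num_components_del V E S \<longrightarrow> t * real (num_components_del V E S) \<le> real (card S))"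
  unfolding tough_def cutset_def del_verts_def fst_conv snd_conv by (intro iff_allI) blast

lemma num_components_del_delete_nbhd_edge_le:
  assumes sg: "simple_graph V E" and u: "u \<in> nbhd V E v" and w: "w \<in> nbhd V E v"
    and v: "v \<in> V - S"
  shows "num_components_del V (E - {{u, w}}) S \<le> num_components_del V E S"
proof -
  define ES where "ES = {e \<in> E. e \<inter> S = {}}"
  have fin: "finite (V - S)" using sg unfolding simple_graph_def by simp
  have uv: "{u, v} \<in> E" "u \<in> V" and wv: "{w, v} \<in> E" "w \<in> V"
    using u w unfolding nbhd_def by auto
  have "u \<noteq> v" "w \<noteq> v" using uv wv simple_graph_edge_neq[OF sg] by auto
  show ?thesis
  proof (cases "u \<in> S \<or> w \<in> S")
    case True
    then have "{e \<in> E - {{u, w}}. e \<inter> S = {}} = ES" unfolding ES_def by auto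
    then show ?thesis unfolding ES_def by simp
  next
    case False
    have "{u, v} \<in> ES - {{u, w}}" "{v, w} \<in> ES - {{u, w}}"
      using uv wv False v \<open>u \<noteq> v\<close> \<open>w \<noteq> v\<close>
      unfolding ES_def by (auto simp: doubleton_eq_iff insert_commute)
    moreover have "u \<in> V - S" "w \<in> V - S" using uv wv False by auto
    ultimately have "(u, w) \<in> reach (V - S) (ES - {{u, w}})"
      using v by (meson reach_edge reach_trans)
    moreover have "{e \<in> E - {{u, w}}. e \<inter> S = {}} = ES - {{u, w}}" unfolding ES_def by auto
    ultimately show ?thesis
      unfolding ES_def using num_components_delete_edge_le[OF fin] by simp
  qed
qed

lemma num_components_del_delete_nbhd_edge_le_restore:
  assumes sg: "simple_graph V E" and v: "simplicial V E v"
    and u: "u \<in> nbhd V E v" and w: "w \<in> nbhd V E v" and S: "v \<in> S"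
  shows "num_components_del V (E - {{u, w}}) S \<le> num_components_del V E (S - {v}) + 1"
proof -
  define EH where "EH = {e \<in> E - {{u, w}}. e \<inter> S = {}}"
  define N where "N = nbhd V E v - S"
  have fin: "finite (V - S)" using sg unfolding simple_graph_def by simp
  have V': "V - (S - {v}) = insert v (V - S)"
    using v S unfolding simplicial_def by auto
  have N: "N \<subseteq> V - S" unfolding N_def nbhd_def by auto
  have "num_components (V - S) EH + 1 \<le>
      num_components_del V E (S - {v}) + card (component_of (V - S) EH ` N)"
    unfolding V'
  proof (rule num_components_insert_vertex[OF fin N])
    fix x y assume x: "x \<in> insert v (V - S)" and y: "y \<in> insert v (V - S)"
      and xy: "{x, y} \<in> {e \<in> E. e \<inter> (S - {v}) = {}}"
    have xyE: "{x, y} \<in> E" "{y, x} \<in> E" using xy by (auto simp: insert_commute)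
    have "x \<noteq> y" using xyE simple_graph_edge_neq[OF sg] by simp
    consider "x = v" | "y = v" | "x \<in> V - S" "y \<in> V - S" using x y by blast
    then show "x \<in> insert v N \<and> y \<in> insert v N \<or> x \<in> V - S \<and> y \<in> V - S \<and> {x, y} \<in> EH"
    proof cases
      case 1
      then show ?thesis using \<open>x \<noteq> y\<close> xyE y unfolding N_def nbhd_def by auto
    next
      case 2
      then show ?thesis using \<open>x \<noteq> y\<close> xyE x unfolding N_def nbhd_def by auto
    next
      case 3
      show ?thesis
      proof (cases "{x, y} = {u, w}")
        case True
        then have "x \<in> nbhd V E v" "y \<in> nbhd V E v" using u w by (auto simp: doubleton_eq_iff)
        then show ?thesis using 3 unfolding N_def by auto
      next
        case False
        then show ?thesis using 3 xyE unfolding EH_def by auto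
      qed
    qed
  qed (use S in auto)
  moreover have "card (component_of (V - S) EH ` N) \<le> 2"
  proof (rule card_components_meeting_clique_minus_edge[OF N])
    fix x y assume xy: "x \<in> N" "y \<in> N" "x \<noteq> y" "{x, y} \<noteq> {u, w}"
    then have "{x, y} \<in> E" using v unfolding simplicial_def N_def by blast
    then show "{x, y} \<in> EH" using xy unfolding EH_def N_def by auto
  qed
  ultimately show ?thesis unfolding EH_def by linarith
qed

text \<open>\<open>t \<le> 1/2\<close> is needed when v \<in> S and \<open>S - {v}\<close> is no longer a cutset of G; then
  \<open>G - uw - S\<close> has exactly two components and \<open>|S| \<ge> 1\<close>.\<close>
lemma tough_delete_edge_in_simplicial_nbhd:
  assumes sg: "simple_graph V E" and tough: "tough V E t" and t: "0 < t" "t \<le> 1/2"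
    and v: "simplicial V E v" and u: "u \<in> nbhd V E v" and w: "w \<in> nbhd V E v"
  shows "tough V (E - {{u, w}}) t"
  unfolding tough_iff
proof (intro allI impI)
  fix S assume SV: "S \<subseteq> V" and cut: "2 \<le> num_components_del V (E - {{u, w}}) S"
  define \<omega>H where "\<omega>H = num_components_del V (E - {{u, w}}) S"
  have tough_G: "t * real (num_components_del V E T) \<le> real (card T)"
    if "T \<subseteq> V" "2 \<le> num_components_del V E T" for T
    using tough that unfolding tough_iff by blast
  show "t * real \<omega>H \<le> real (card S)"
  proof (cases "v \<in> S")
    case False
    then have le: "\<omega>H \<le> num_components_del V E S"
      using num_components_del_delete_nbhd_edge_le[OF sg u w] v
      unfolding \<omega>H_def simplicial_def by blast
    then have "t * real \<omega>H \<le> t * real (num_components_del V E S)"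
      using t by (intro mult_left_mono) auto
    also have "\<dots> \<le> real (card S)" using tough_G[OF SV] le cut unfolding \<omega>H_def by linarith
    finally show ?thesis .
  next
    case True
    define \<omega>' where "\<omega>' = num_components_del V E (S - {v})"
    have \<omega>H: "\<omega>H \<le> \<omega>' + 1"
      unfolding \<omega>H_def \<omega>'_def using num_components_del_delete_nbhd_edge_le_restore[OF sg v u w True] .
    have "card S = Suc (card (S - {v}))"
      using sg SV True finite_subset unfolding simple_graph_def
      by (metis card_Suc_Diff1)
    then have cardS: "real (card S) = real (card (S - {v})) + 1" by simp
    show ?thesis
    proof (cases "2 \<le> \<omega>'")
      case True
      then have "t * real \<omega>' \<le> real (card (S - {v}))"
        using tough_G SV unfolding \<omega>'_def by blast
      moreover have "t * real \<omega>H \<le> t * real \<omega>' + t"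
        using mult_left_mono[of "real \<omega>H" "real \<omega>' + 1" t] \<omega>H t by (simp add: distrib_left)
      ultimately show ?thesis using cardS t by linarith
    next
      case False
      then have "t * real \<omega>H \<le> t * 2"
        using \<omega>H t by (intro mult_left_mono) auto
      then show ?thesis using cardS t by linarith
    qed
  qed
qed

lemma tough_if_toughness_eq:
  assumes "toughness V E = ereal t"
  shows "tough V E t"
  unfolding tough_iff
proof (intro allI impI)
  fix S assume SV: "S \<subseteq> V" and cut: "2 \<le> num_components_del V E S"
  define k where "k = real (num_components_del V E S)"
  have k: "k > 0" using cut unfolding k_def by simp
  have "toughness V E \<le> ereal (real (card S) / k)"
    unfolding toughness_def
  proof (rule Sup_least)
    fix x assume "x \<in> {ereal s |s. 0 \<le> s \<and> tough V E s}"
    then obtain s where s: "x = ereal s" "tough V E s" by auto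
    then have "s * k \<le> real (card S)" using SV cut unfolding tough_iff k_def by auto
    then show "x \<le> ereal (real (card S) / k)" using s k by (simp add: pos_le_divide_eq)
  qed
  then have "t * k \<le> real (card S)" using assms k by (simp add: pos_le_divide_eq)
  then show "t * real (num_components_del V E S) \<le> real (card S)" unfolding k_def .
qed

lemma tough_if_minimally_tough: "minimally_tough V E t \<Longrightarrow> tough V E t"
  unfolding minimally_tough_def by (intro tough_if_toughness_eq) simp

lemma ereal_le_toughness: "0 \<le> s \<Longrightarrow> tough V E s \<Longrightarrow> ereal s \<le> toughness V E"
  unfolding toughness_def by (rule Sup_upper) auto

lemma minimally_tough_delete_edge_not_tough:
  assumes "minimally_tough V E t" "0 \<le> t" "e \<in> E"
  shows "\<not> tough V (E - {e}) t"
  using assms ereal_le_toughness[of t V "E - {e}"] unfolding minimally_tough_def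
  by (meson not_le)

lemma toughness_singleton: "toughness {v} E = \<infinity>"
proof -
  have "tough {v} E s" for s
  proof -
    have small: "num_components_del {v} E S < 2" for S
      using le_trans[OF num_components_le_card[of "{v} - S" "{e \<in> E. e \<inter> S = {}}"]
          card_mono[of "{v}" "{v} - S"]]
      by simp
    then have "\<not> cutset {v} E S" for S
      unfolding cutset_def del_verts_def fst_conv snd_conv by (meson not_le)
    then show ?thesis unfolding tough_def by blast
  qed
  then have "ereal (max 0 s) \<le> toughness {v} E" for s
    by (intro ereal_le_toughness) auto
  then show ?thesis
    by (intro ereal_top) (meson ereal_less_eq(3) max.cobounded2 order_trans)
qed

lemma num_components_ge_2_if_isolated:
  assumes "finite V" "v \<in> V" "y \<in> V" "y \<noteq> v" "nbhd V E v = {}"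
  shows "2 \<le> num_components V E"
proof -
  have "card ((\<lambda>x. x = v) ` V) \<le> num_components V E"
  proof (rule card_image_le_num_components[OF assms(1)])
    fix x z assume "x \<in> V" "z \<in> V" "{x, z} \<in> E"
    then show "(x = v) = (z = v)"
      using assms(5) unfolding nbhd_def by (auto simp: insert_commute)
  qed
  moreover have "(\<lambda>x. x = v) ` V = {True, False}" using assms(2-4) by auto
  ultimately show ?thesis by simp
qed

lemma minimally_tough_nbhd_nonempty:
  assumes fin: "finite V" and mt: "minimally_tough V E t" and t: "0 < t" and v: "v \<in> V"
  shows "nbhd V E v \<noteq> {}"
proof
  assume isolated: "nbhd V E v = {}"
  show False
  proof (cases "V = {v}")
    case True
    then show False using mt unfolding minimally_tough_def True toughness_singleton by simp
  next
    case False
    then obtain y where "y \<in> V" "y \<noteq> v" using v by blast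
    then have two: "2 \<le> num_components V E"
      by (intro num_components_ge_2_if_isolated[OF fin v _ _ isolated])
    from tough_if_minimally_tough[OF mt, unfolded tough_iff, rule_format, of "{}"] two
    have "t * real (num_components V E) \<le> 0" by simp
    then show False using t two by (simp add: mult_le_0_iff)
  qed
qed

theorem mainTheorem3:
  fixes V :: "'a set" and E :: "'a set set" and t :: real
  assumes "simple_graph V E"
    and "t \<in> \<rat>" and "0 < t" and "t \<le> 1/2"
    and "minimally_tough V E t"
    and "chordal V E"
    and "simplicial V E v"
  shows "degree V E v = 1"
proof -
  have fin: "finite V" using assms(1) unfolding simple_graph_def by simp
  have tough: "tough V E t" using assms(5) by (rule tough_if_minimally_tough)
  have finN: "finite (nbhd V E v)" using fin unfolding nbhd_def by simp
  have "card (nbhd V E v) \<le> 1"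
  proof (rule ccontr)
    assume "\<not> card (nbhd V E v) \<le> 1"
    then obtain u w where u: "u \<in> nbhd V E v" and w: "w \<in> nbhd V E v" and "u \<noteq> w"
      using finN card_le_Suc0_iff_eq by (metis One_nat_def)
    then have "{u, w} \<in> E" using assms(7) unfolding simplicial_def by blast
    moreover have "tough V (E - {{u, w}}) t"
      using tough_delete_edge_in_simplicial_nbhd[OF assms(1) tough assms(3,4,7) u w] .
    ultimately show False
      using minimally_tough_delete_edge_not_tough[OF assms(5)] assms(3) by simp
  qed
  moreover have "nbhd V E v \<noteq> {}"
    using minimally_tough_nbhd_nonempty[OF fin assms(5,3)] assms(7) unfolding simplicial_def by simp
  then have "card (nbhd V E v) \<noteq> 0" using finN by simp
  ultimately show ?thesis unfolding degree_def by linarith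
qed

end
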